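(* Let $A$ and $B$ be connected graded $k$-algebras generated in degree $1$. Suppose that $d=\dim_k A_1<\infty$ and that $A_{\ge1}$ is the unique codimension $1$ ideal of $A$ with tangent dimension $d$. If $A\cong B$ as ungraded algebras, then $A\cong B$ as graded algebras.
   Context: A connected graded algebra satisfies $A_0=k$, and $A_{\ge1}=\bigoplus_{i\ge1}A_i$. A codimension $1$ ideal of tangent dimension $s$ in an algebra $R$ is a two-sided ideal $I$ with $\dim_k R/I=1$ and $\dim_k I/I^2=s$. *)

theory Defs
  imports Complex_Main
begin

definition is_algebra :: "('k::field \<Rightarrow> 'a::ring_1 \<Rightarrow> 'a) \<Rightarrow> bool" where
  "is_algebra sc \<longleftrightarrow> Vector_Spaces.vector_space sc \<and>
     (\<forall>c x y. sc c (x * y) = sc c x * y \<and> sc c (x * y) = x * sc c y)"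

definition fin_dim :: "('k::field \<Rightarrow> 'a::ab_group_add \<Rightarrow> 'a) \<Rightarrow> 'a set \<Rightarrow> bool" where
  "fin_dim sc V \<longleftrightarrow> (\<exists>S. finite S \<and> Modules.module.span sc S = V)"

definition graded :: "('k::field \<Rightarrow> 'a::ring_1 \<Rightarrow> 'a) \<Rightarrow> (nat \<Rightarrow> 'a set) \<Rightarrow> bool" where
  "graded sc A \<longleftrightarrow> is_algebra sc \<and>
     (\<forall>i. Modules.module.subspace sc (A i)) \<and>
     (\<forall>i j x y. x \<in> A i \<longrightarrow> y \<in> A j \<longrightarrow> x * y \<in> A (i + j)) \<and>
     (\<forall>x. \<exists>!c :: nat \<Rightarrow> 'a. finite {i. c i \<noteq> 0} \<and> (\<forall>i. c i \<in> A i) \<and>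
            x = (\<Sum>i\<in>{i. c i \<noteq> 0}. c i))"

text \<open>Connected: A_0 = k, i.e. c \<mapsto> c\<cdot>1 is a bijection k \<rightarrow> A_0.\<close>
definition connected_graded :: "('k::field \<Rightarrow> 'a::ring_1 \<Rightarrow> 'a) \<Rightarrow> (nat \<Rightarrow> 'a set) \<Rightarrow> bool" where
  "connected_graded sc A \<longleftrightarrow> graded sc A \<and>
     A 0 = range (\<lambda>c. sc c 1) \<and> inj (\<lambda>c. sc c 1)"

text \<open>Generated in degree 1: the subalgebra generated by A_1 (the span of all
  finite products of elements of A_1, the empty product being 1) is everything.\<close>
definition generated_in_degree_1 :: "('k::field \<Rightarrow> 'a::ring_1 \<Rightarrow> 'a) \<Rightarrow> (nat \<Rightarrow> 'a set) \<Rightarrow> bool" where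
  "generated_in_degree_1 sc A \<longleftrightarrow>
     Modules.module.span sc {prod_list xs | xs. set xs \<subseteq> A 1} = UNIV"

definition aug_ideal :: "('k::field \<Rightarrow> 'a::ring_1 \<Rightarrow> 'a) \<Rightarrow> (nat \<Rightarrow> 'a set) \<Rightarrow> 'a set" where
  "aug_ideal sc A = Modules.module.span sc (\<Union>i\<in>{1..}. A i)"

definition two_sided_ideal :: "('k::field \<Rightarrow> 'a::ring_1 \<Rightarrow> 'a) \<Rightarrow> 'a set \<Rightarrow> bool" where
  "two_sided_ideal sc I \<longleftrightarrow> Modules.module.subspace sc I \<and>
     (\<forall>r x. x \<in> I \<longrightarrow> r * x \<in> I \<and> x * r \<in> I)"

text \<open>dim_k (V / U) = n for subspaces U \<subseteq> V: some (equivalently every) complement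
  W of U in V is finite-dimensional of dimension n.\<close>
definition quot_dim_eq :: "('k::field \<Rightarrow> 'a::ab_group_add \<Rightarrow> 'a) \<Rightarrow> 'a set \<Rightarrow> 'a set \<Rightarrow> nat \<Rightarrow> bool" where
  "quot_dim_eq sc V U n \<longleftrightarrow> U \<subseteq> V \<and>
     (\<exists>W. Modules.module.subspace sc W \<and> W \<subseteq> V \<and> U \<inter> W = {0} \<and>
          {u + w | u w. u \<in> U \<and> w \<in> W} = V \<and>
          fin_dim sc W \<and> Vector_Spaces.vector_space.dim sc W = n)"

definition ideal_square :: "('k::field \<Rightarrow> 'a::ring_1 \<Rightarrow> 'a) \<Rightarrow> 'a set \<Rightarrow> 'a set" where
  "ideal_square sc I = Modules.module.span sc {x * y | x y. x \<in> I \<and> y \<in> I}"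

definition codim1_ideal_tangent_dim :: "('k::field \<Rightarrow> 'a::ring_1 \<Rightarrow> 'a) \<Rightarrow> 'a set \<Rightarrow> nat \<Rightarrow> bool" where
  "codim1_ideal_tangent_dim sc I s \<longleftrightarrow> two_sided_ideal sc I \<and>
     quot_dim_eq sc UNIV I 1 \<and> quot_dim_eq sc I (ideal_square sc I) s"

definition algebra_iso :: "('k::field \<Rightarrow> 'a::ring_1 \<Rightarrow> 'a) \<Rightarrow> ('k \<Rightarrow> 'b::ring_1 \<Rightarrow> 'b) \<Rightarrow> ('a \<Rightarrow> 'b) \<Rightarrow> bool" where
  "algebra_iso scA scB f \<longleftrightarrow> bij f \<and>
     (\<forall>x y. f (x + y) = f x + f y) \<and> (\<forall>c x. f (scA c x) = scB c (f x)) \<and>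
     (\<forall>x y. f (x * y) = f x * f y) \<and> f 1 = 1"

definition graded_algebra_iso :: "('k::field \<Rightarrow> 'a::ring_1 \<Rightarrow> 'a) \<Rightarrow> (nat \<Rightarrow> 'a set) \<Rightarrow>
    ('k \<Rightarrow> 'b::ring_1 \<Rightarrow> 'b) \<Rightarrow> (nat \<Rightarrow> 'b set) \<Rightarrow> ('a \<Rightarrow> 'b) \<Rightarrow> bool" where
  "graded_algebra_iso scA A scB B f \<longleftrightarrow> algebra_iso scA scB f \<and> (\<forall>i. f ` A i = B i)"

end

theory Submission
  imports Defs
begin

text \<open>An ungraded isomorphism \<open>f : A \<rightarrow> B\<close> carries codimension 1 ideals of a given tangent
  dimension to such ideals. Because \<open>A\<close> is generated by \<open>A\<^sub>1\<close>, every codimension 1 ideal \<open>I\<close>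
  of \<open>A\<close> has \<open>dim I/I\<^sup>2 \<le> dim A\<^sub>1\<close>, with equality for \<open>A\<^sub>\<ge>\<^sub>1\<close>. Transporting along \<open>f\<close> and
  its inverse gives \<open>dim B\<^sub>1 = dim A\<^sub>1 = d\<close>, so \<open>f\<inverse>(B\<^sub>\<ge>\<^sub>1)\<close> has tangent dimension \<open>d\<close> and by
  uniqueness equals \<open>A\<^sub>\<ge>\<^sub>1\<close>. Then \<open>f\<close> maps each power \<open>A\<^sub>\<ge>\<^sub>n\<close> onto \<open>B\<^sub>\<ge>\<^sub>n\<close>, and the associated
  graded map of \<open>f\<close> is a graded isomorphism.\<close>

context vector_space begin

lemma independent_Un_of_span_Int:
  assumes "finite T" "independent F" "independent T" "span F \<inter> span T \<subseteq> {0}"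
  shows "independent (F \<union> T)"
  using assms
proof (induction T rule: finite_induct)
  case empty then show ?case by simp
next
  case (insert t T)
  have "span T \<subseteq> span (insert t T)" by (rule span_mono) auto
  then have indep: "independent (F \<union> T)"
    using insert independent_mono[OF insert.prems(2)] by blast
  have t_notin: "t \<notin> span T" using insert.prems(2) insert.hyps(2) by (simp add: independent_insert)
  have "t \<notin> span (F \<union> T)"
  proof
    assume "t \<in> span (F \<union> T)"
    then obtain a b where ab: "a \<in> span F" "b \<in> span T" "t = a + b" by (auto simp: span_Un)
    have "a = t - b" using ab by simp
    moreover have "t - b \<in> span (insert t T)"
      using ab(2) \<open>span T \<subseteq> span (insert t T)\<close> by (meson insertI1 span_base span_diff subsetD)
    ultimately have "a = 0" using ab(1) insert.prems(3) by auto
    then show False using ab t_notin by simp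
  qed
  then show ?case using indep by (simp add: independent_insertI)
qed

text \<open>Write each \<open>t \<in> T\<close> as \<open>u\<^sub>t + s\<^sub>t\<close>; for a basis \<open>F\<close> of the span of the \<open>u\<^sub>t\<close>, the set
  \<open>F \<union> T\<close> is independent and lies in \<open>span (F \<union> S)\<close>.\<close>

lemma card_independent_le_of_complement:
  assumes U: "subspace U" and W: "subspace W" and UW: "U \<inter> W \<subseteq> {0}"
    and cover: "W \<subseteq> {u + s | u s. u \<in> U \<and> s \<in> span S}" and "finite S"
    and T: "finite T" "independent T" "T \<subseteq> W"
  shows "card T \<le> card S"
proof -
  obtain sf where sf: "\<And>t. t \<in> T \<Longrightarrow> sf t \<in> span S \<and> t - sf t \<in> U"
  proof -
    have "\<exists>s. s \<in> span S \<and> t - s \<in> U" if "t \<in> T" for t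
    proof -
      obtain u s where "u \<in> U" "s \<in> span S" "t = u + s" using cover T(3) \<open>t \<in> T\<close> by blast
      then show ?thesis by auto
    qed
    then show thesis using that by metis
  qed
  define G where "G = (\<lambda>t. t - sf t) ` T"
  obtain F where F: "F \<subseteq> G" "independent F" "G \<subseteq> span F"
    using maximal_independent_subset by blast
  have "finite F" using F(1) T(1) finite_subset by (auto simp: G_def)
  have "G \<subseteq> U" using sf by (auto simp: G_def)
  then have "span F \<subseteq> U" using F(1) U span_minimal by blast
  moreover have "span T \<subseteq> W" using T W span_minimal by blast
  ultimately have disj: "span F \<inter> span T \<subseteq> {0}" using UW by blast
  have indep: "independent (F \<union> T)" by (rule independent_Un_of_span_Int[OF T(1) F(2) T(2) disj])
  have "F \<inter> T = {}"
    using disj span_superset dependent_zero[of T] T(2) by blast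
  have "F \<union> T \<subseteq> span (F \<union> S)"
  proof
    fix x assume "x \<in> F \<union> T"
    then show "x \<in> span (F \<union> S)"
    proof
      assume xT: "x \<in> T"
      have "x - sf x \<in> span (F \<union> S)" "sf x \<in> span (F \<union> S)"
        using F(3) sf[OF xT] xT span_mono[of F "F \<union> S"] span_mono[of S "F \<union> S"]
        by (auto simp: G_def)
      then show ?thesis using span_add by fastforce
    qed (simp add: span_base)
  qed
  then have "card (F \<union> T) \<le> card (F \<union> S)"
    using independent_span_bound[OF _ indep] \<open>finite F\<close> \<open>finite S\<close> by simp
  also have "\<dots> \<le> card F + card S" by (rule card_Un_le)
  finally show ?thesis using card_Un_disjoint[OF \<open>finite F\<close> T(1) \<open>F \<inter> T = {}\<close>] by simp
qed

lemma fin_dim_le_of_complement: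
  assumes U: "subspace U" and W: "subspace W" and UW: "U \<inter> W \<subseteq> {0}"
    and cover: "W \<subseteq> {u + s | u s. u \<in> U \<and> s \<in> span S}" and S: "finite S"
  shows "fin_dim scale W \<and> dim W \<le> card S"
proof -
  obtain B where B: "B \<subseteq> W" "independent B" "W \<subseteq> span B"
    using maximal_independent_subset by blast
  have bound: "card T \<le> card S" if "finite T" "T \<subseteq> B" for T
    using card_independent_le_of_complement[OF U W UW cover S that(1)] that(2) B independent_mono
    by blast
  have "finite B"
  proof (rule ccontr)
    assume "infinite B"
    then obtain T where "T \<subseteq> B" "card T = Suc (card S)" using infinite_arbitrarily_large by blast
    then show False using bound[of T] card_ge_0_finite by force
  qed
  moreover have "card B = dim W" using basis_card_eq_dim B by blast
  moreover have "span B = W" using B W span_subspace by blast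
  ultimately show ?thesis using bound[of B] unfolding fin_dim_def by auto
qed

end

locale k_algebra =
  fixes sc :: "'k::field \<Rightarrow> 'a::ring_1 \<Rightarrow> 'a"
  assumes is_algebra: "is_algebra sc"
begin

sublocale vector_space sc using is_algebra by (simp add: is_algebra_def)

lemma scale_mult_left: "sc c x * y = sc c (x * y)"
  and scale_mult_right: "x * sc c y = sc c (x * y)"
  using is_algebra unfolding is_algebra_def by metis+

lemma scale_one_mult: "sc c 1 * x = sc c x"
  using scale_mult_left[of c 1 x] by simp

lemma mult_scale_one: "x * sc c 1 = sc c x"
  using scale_mult_right[of x c 1] by simp

lemma span_mult:
  assumes "x \<in> span X" "y \<in> span Y"
  shows "x * y \<in> span {a * b | a b. a \<in> X \<and> b \<in> Y}"
proof -
  let ?P = "{a * b | a b. a \<in> X \<and> b \<in> Y}"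
  have left: "a * y \<in> span ?P" if "a \<in> X" for a
    using assms(2)
  proof (induction y rule: span_induct_alt)
    case (step c b y)
    have "a * b \<in> span ?P" using step that by (auto intro: span_base)
    then show ?case
      using step by (simp add: distrib_left scale_mult_right span_add span_scale)
  qed (simp add: span_zero)
  show ?thesis using assms(1)
  proof (induction x rule: span_induct_alt)
    case (step c a x)
    then show ?case
      using left by (simp add: distrib_right scale_mult_left span_add span_scale)
  qed (simp add: span_zero)
qed

lemma ideal_square_subset:
  assumes "two_sided_ideal sc I" shows "ideal_square sc I \<subseteq> I"
  using assms span_minimal[of "{x * y | x y. x \<in> I \<and> y \<in> I}" I]
  unfolding two_sided_ideal_def ideal_square_def by blast

lemma mult_mem_ideal_square: "x \<in> I \<Longrightarrow> y \<in> I \<Longrightarrow> x * y \<in> ideal_square sc I"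
  unfolding ideal_square_def by (intro span_base) blast

lemma subspace_ideal_square: "subspace (ideal_square sc I)"
  by (simp add: ideal_square_def)

lemma ideal_square_mult_left:
  assumes I: "two_sided_ideal sc I" and q: "q \<in> ideal_square sc I"
  shows "r * q \<in> ideal_square sc I"
  using q unfolding ideal_square_def
proof (induction q rule: span_induct_alt)
  case (step c p q)
  then obtain x y where "p = x * y" "x \<in> I" "y \<in> I" by blast
  then have "r * p \<in> ideal_square sc I"
    using I by (simp add: mult.assoc[symmetric] mult_mem_ideal_square two_sided_ideal_def)
  then show ?case
    using step by (simp add: distrib_left scale_mult_right span_add span_scale ideal_square_def)
qed (simp add: span_zero)

lemma codim1_ideal_one_notin:
  assumes I: "two_sided_ideal sc I" and codim: "quot_dim_eq sc UNIV I 1"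
  shows "1 \<notin> I"
proof
  assume "1 \<in> I"
  then have "I = UNIV" using I unfolding two_sided_ideal_def by (metis UNIV_eq_I mult_1_left)
  moreover obtain W where "I \<inter> W = {0}" "subspace W" "dim W = 1"
    using codim unfolding quot_dim_eq_def by blast
  ultimately show False using dim_le_card[of W "{}"] by auto
qed

lemma codim1_ideal_decomp:
  assumes I: "two_sided_ideal sc I" and codim: "quot_dim_eq sc UNIV I 1"
  shows "\<exists>i c. i \<in> I \<and> r = i + sc c 1"
proof -
  have I_sub: "subspace I" using I by (simp add: two_sided_ideal_def)
  obtain W where W: "subspace W" "{u + w | u w. u \<in> I \<and> w \<in> W} = UNIV" "dim W = 1"
    using codim unfolding quot_dim_eq_def by blast
  obtain B where B: "B \<subseteq> W" "independent B" "W \<subseteq> span B" "card B = dim W"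
    by (rule basis_exists)
  then obtain w where "B = {w}" using W(3) by (metis card_1_singletonE)
  then have W_line: "W \<subseteq> range (\<lambda>c. sc c w)" using B(3) span_singleton by auto
  have decomp_w: "\<exists>i c. i \<in> I \<and> x = i + sc c w" for x
  proof -
    obtain i v where "i \<in> I" "v \<in> W" "x = i + v" using W(2) by blast
    then show ?thesis using W_line by blast
  qed
  obtain i1 c1 where i1: "i1 \<in> I" "1 = i1 + sc c1 w" using decomp_w by blast
  have "c1 \<noteq> 0" using i1 codim1_ideal_one_notin[OF I codim] by auto
  obtain i c where ic: "i \<in> I" "r = i + sc c w" using decomp_w by blast
  have "sc c1 w = 1 - i1" using i1(2) by (metis add_diff_cancel_left')
  then have "sc (c / c1) (1 - i1) = sc (c / c1 * c1) w" by (metis scale_scale)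
  also have "\<dots> = sc c w" using \<open>c1 \<noteq> 0\<close> by simp
  finally have "sc c w = sc (c / c1) (1 - i1)" ..
  then have "r = (i - sc (c / c1) i1) + sc (c / c1) 1"
    using ic(2) by (simp add: scale_right_diff_distrib)
  moreover have "i - sc (c / c1) i1 \<in> I" using ic(1) i1(1) I_sub by (simp add: subspace_diff subspace_scale)
  ultimately show ?thesis by blast
qed

lemma mult_span_insert_one:
  assumes I: "two_sided_ideal sc I" and Phi: "Phi \<subseteq> I"
    and x: "x \<in> span (insert 1 Phi)" and y: "y \<in> span (insert 1 Phi)"
  shows "x * y \<in> {q + u | q u. q \<in> ideal_square sc I \<and> u \<in> span (insert 1 Phi)}"
proof -
  obtain a b where a: "x - sc a 1 \<in> span Phi" and b: "y - sc b 1 \<in> span Phi"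
    using x y by (auto simp: span_insert)
  define x' y' where "x' = x - sc a 1" and "y' = y - sc b 1"
  have "span Phi \<subseteq> I" using Phi I span_minimal by (simp add: two_sided_ideal_def)
  then have "x' * y' \<in> ideal_square sc I"
    using a b by (simp add: x'_def y'_def mult_mem_ideal_square subsetD)
  moreover have "sc b x' + sc a y' + sc (a * b) 1 \<in> span (insert 1 Phi)"
  proof -
    have "x' \<in> span (insert 1 Phi)" "y' \<in> span (insert 1 Phi)" "1 \<in> span (insert 1 Phi)"
      using a b span_mono[of Phi "insert 1 Phi"] by (auto simp: x'_def y'_def span_base)
    then show ?thesis by (intro span_add span_scale)
  qed
  moreover have "x * y = x' * y' + (sc b x' + sc a y' + sc (a * b) 1)"
    by (simp add: x'_def y'_def algebra_simps scale_one_mult mult_scale_one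
        scale_right_diff_distrib)
  ultimately show ?thesis by blast
qed

text \<open>Every product of elements of \<open>V\<close> lies in \<open>I\<^sup>2 + span Phi + k 1\<close>; for elements of \<open>I\<close>
  the \<open>k 1\<close> part vanishes because \<open>1 \<notin> I\<close>.\<close>

lemma codim1_ideal_cover:
  assumes I: "two_sided_ideal sc I" and codim: "quot_dim_eq sc UNIV I 1"
    and gen: "span {prod_list xs | xs. set xs \<subseteq> V} = UNIV"
    and Phi: "Phi \<subseteq> I" and V: "V \<subseteq> span (insert 1 Phi)"
  shows "I \<subseteq> {q + s | q s. q \<in> ideal_square sc I \<and> s \<in> span Phi}"
proof
  define M where "M = {q + u | q u. q \<in> ideal_square sc I \<and> u \<in> span (insert 1 Phi)}"
  have M: "subspace M" unfolding M_def by (simp add: subspace_sums subspace_ideal_square)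
  have mult_M: "x * y \<in> M" if "x \<in> V" "y \<in> M" for x y
  proof -
    obtain q u where qu: "q \<in> ideal_square sc I" "u \<in> span (insert 1 Phi)" "y = q + u"
      using \<open>y \<in> M\<close> unfolding M_def by blast
    have "x * q + 0 \<in> M"
      using ideal_square_mult_left[OF I qu(1)] span_zero unfolding M_def by blast
    moreover have "x * u \<in> M"
      using mult_span_insert_one[OF I Phi _ qu(2)] V that(1) unfolding M_def by blast
    ultimately have "x * q + x * u \<in> M" using subspace_add[OF M] by simp
    then show ?thesis by (simp add: qu(3) distrib_left)
  qed
  have "prod_list xs \<in> M" if "set xs \<subseteq> V" for xs
    using that
  proof (induction xs)
    case Nil
    have "0 \<in> ideal_square sc I" "1 \<in> span (insert 1 Phi)"
      by (simp_all add: ideal_square_def span_zero span_base)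
    then have "0 + 1 \<in> M" unfolding M_def by blast
    then show ?case by simp
  qed (simp add: mult_M)
  then have "span {prod_list xs | xs. set xs \<subseteq> V} \<subseteq> M" by (intro span_minimal[OF _ M]) blast
  then have M_UNIV: "M = UNIV" using gen by blast
  fix x assume "x \<in> I"
  obtain q u where qu: "q \<in> ideal_square sc I" "u \<in> span (insert 1 Phi)" "x = q + u"
    using M_UNIV unfolding M_def by blast
  obtain e where e: "u - sc e 1 \<in> span Phi" using qu(2) unfolding span_insert by blast
  have I_sub: "subspace I" using I by (simp add: two_sided_ideal_def)
  have "u - sc e 1 \<in> I" using e Phi I_sub span_minimal by blast
  moreover have "q \<in> I" using qu(1) ideal_square_subset[OF I] by blast
  ultimately have "x - q - (u - sc e 1) \<in> I"
    using \<open>x \<in> I\<close> subspace_diff[OF I_sub] by blast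
  then have e1: "sc e 1 \<in> I" by (simp add: qu(3))
  have "e = 0"
  proof (rule ccontr)
    assume "e \<noteq> 0"
    then have "sc (1 / e) (sc e 1) = 1" by simp
    then show False
      using subspace_scale[OF I_sub e1, of "1 / e"] codim1_ideal_one_notin[OF I codim] by simp
  qed
  then show "x \<in> {q + s | q s. q \<in> ideal_square sc I \<and> s \<in> span Phi}" using qu e by auto
qed

lemma codim1_ideal_complement_bound:
  assumes I: "two_sided_ideal sc I" and codim: "quot_dim_eq sc UNIV I 1"
    and gen: "span {prod_list xs | xs. set xs \<subseteq> V} = UNIV"
    and T: "finite T" "V \<subseteq> span T"
    and W: "subspace W" "W \<subseteq> I" "ideal_square sc I \<inter> W \<subseteq> {0}"
  shows "fin_dim sc W \<and> dim W \<le> card T"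
proof -
  obtain coef where coef: "\<And>t. t - sc (coef t) 1 \<in> I"
    using codim1_ideal_decomp[OF I codim] by (metis add_diff_cancel_right')
  define Phi where "Phi = (\<lambda>t. t - sc (coef t) 1) ` T"
  have "T \<subseteq> span (insert 1 Phi)"
    by (auto simp: span_insert Phi_def intro!: span_base)
  then have "V \<subseteq> span (insert 1 Phi)" using T(2) span_minimal[of T] by blast
  moreover have "Phi \<subseteq> I" using coef by (auto simp: Phi_def)
  ultimately have "I \<subseteq> {q + s | q s. q \<in> ideal_square sc I \<and> s \<in> span Phi}"
    using codim1_ideal_cover[OF I codim gen] by blast
  then have "W \<subseteq> {q + s | q s. q \<in> ideal_square sc I \<and> s \<in> span Phi}" using W(2) by blast
  then have "fin_dim sc W \<and> dim W \<le> card Phi"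
    using fin_dim_le_of_complement[OF subspace_ideal_square W(1) W(3)] T(1) by (simp add: Phi_def)
  moreover have "card Phi \<le> card T" unfolding Phi_def by (rule card_image_le[OF T(1)])
  ultimately show ?thesis by simp
qed

end

locale graded_algebra =
  fixes sc :: "'k::field \<Rightarrow> 'a::ring_1 \<Rightarrow> 'a" and A :: "nat \<Rightarrow> 'a set"
  assumes graded: "graded sc A"
begin

sublocale k_algebra sc using graded by unfold_locales (simp add: graded_def)

lemma subspace_A: "subspace (A i)"
  using graded by (simp add: graded_def)

lemma mult_mem_A: "x \<in> A i \<Longrightarrow> y \<in> A j \<Longrightarrow> x * y \<in> A (i + j)"
  using graded by (simp add: graded_def)

lemma zero_mem_A [simp]: "0 \<in> A i"
  using subspace_A subspace_0 by blast

definition hcomp :: "nat \<Rightarrow> 'a \<Rightarrow> 'a" where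
  "hcomp n x = (THE c. finite {i. c i \<noteq> 0} \<and> (\<forall>i. c i \<in> A i) \<and> x = (\<Sum>i\<in>{i. c i \<noteq> 0}. c i)) n"

lemma unique_decomposition:
  "\<exists>!c. finite {i. c i \<noteq> 0} \<and> (\<forall>i. c i \<in> A i) \<and> x = (\<Sum>i\<in>{i. c i \<noteq> 0}. c i)"
  using graded by (simp add: graded_def)

lemma hcomp_decomp:
  "finite {i. hcomp i x \<noteq> 0} \<and> (\<forall>i. hcomp i x \<in> A i) \<and> x = (\<Sum>i\<in>{i. hcomp i x \<noteq> 0}. hcomp i x)"
  using theI'[OF unique_decomposition[of x]] unfolding hcomp_def .

lemma hcomp_mem: "hcomp i x \<in> A i"
  and finite_hcomp: "finite {i. hcomp i x \<noteq> 0}"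
  using hcomp_decomp by blast+

lemma sum_hcomp:
  assumes "finite F" "{i. hcomp i x \<noteq> 0} \<subseteq> F" shows "(\<Sum>i\<in>F. hcomp i x) = x"
proof -
  have "(\<Sum>i\<in>F. hcomp i x) = (\<Sum>i\<in>{i. hcomp i x \<noteq> 0}. hcomp i x)"
    by (rule sum.mono_neutral_right) (use assms in auto)
  then show ?thesis using hcomp_decomp[of x] by simp
qed

lemma hcomp_eq:
  assumes "finite F" "\<And>i. i \<in> F \<Longrightarrow> c i \<in> A i" "x = (\<Sum>i\<in>F. c i)"
  shows "hcomp n x = (if n \<in> F then c n else 0)"
proof -
  let ?c = "\<lambda>i. if i \<in> F then c i else 0"
  let ?P = "\<lambda>c. finite {i. c i \<noteq> 0} \<and> (\<forall>i. c i \<in> A i) \<and> x = (\<Sum>i\<in>{i. c i \<noteq> 0}. c i)"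
  have supp: "{i. ?c i \<noteq> 0} \<subseteq> F" by auto
  have "(\<Sum>i\<in>{i. ?c i \<noteq> 0}. ?c i) = (\<Sum>i\<in>F. ?c i)"
    by (rule sum.mono_neutral_left) (use assms(1) supp in auto)
  then have "?P ?c" using assms finite_subset[OF supp] by auto
  then have "(THE c. ?P c) = ?c"
    by (rule the1_equality[OF unique_decomposition])
  then show ?thesis by (simp add: hcomp_def)
qed

lemma hcomp_homogeneous: "x \<in> A m \<Longrightarrow> hcomp n x = (if n = m then x else 0)"
  using hcomp_eq[of "{m}" "\<lambda>_. x" x n] by auto

lemma hcomp_add: "hcomp n (x + y) = hcomp n x + hcomp n y"
proof -
  let ?F = "{i. hcomp i x \<noteq> 0} \<union> {i. hcomp i y \<noteq> 0}"
  have "x + y = (\<Sum>i\<in>?F. hcomp i x + hcomp i y)"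
    using sum_hcomp[of ?F x] sum_hcomp[of ?F y] finite_hcomp by (simp add: sum.distrib)
  then have "hcomp n (x + y) = (if n \<in> ?F then hcomp n x + hcomp n y else 0)"
    using finite_hcomp by (intro hcomp_eq) (simp_all add: subspace_add[OF subspace_A] hcomp_mem)
  then show ?thesis by auto
qed

lemma hcomp_scale: "hcomp n (sc c x) = sc c (hcomp n x)"
proof -
  let ?F = "{i. hcomp i x \<noteq> 0}"
  have "sc c x = sc c (\<Sum>i\<in>?F. hcomp i x)" using sum_hcomp[of ?F x] finite_hcomp by simp
  then have "sc c x = (\<Sum>i\<in>?F. sc c (hcomp i x))" by (simp add: scale_sum_right)
  then have "hcomp n (sc c x) = (if n \<in> ?F then sc c (hcomp n x) else 0)"
    using finite_hcomp by (intro hcomp_eq) (simp_all add: subspace_scale[OF subspace_A] hcomp_mem)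
  then show ?thesis by auto
qed

lemma hcomp_zero [simp]: "hcomp n 0 = 0"
  using hcomp_scale[of n 0 0] by simp

lemma hcomp_diff: "hcomp n (x - y) = hcomp n x - hcomp n y"
  using hcomp_add[of n "x - y" y] by simp

lemma hcomp_span_eq_0: "x \<in> span S \<Longrightarrow> (\<And>s. s \<in> S \<Longrightarrow> hcomp n s = 0) \<Longrightarrow> hcomp n x = 0"
  by (induction x rule: span_induct_alt) (auto simp: hcomp_add hcomp_scale)

lemma eq_0_if_hcomp_eq_0: "(\<And>n. hcomp n x = 0) \<Longrightarrow> x = 0"
  using sum_hcomp[of "{}" x] by simp

definition ge_part :: "nat \<Rightarrow> 'a set" where
  "ge_part n = span (\<Union>i\<in>{n..}. A i)"

lemma subspace_ge_part: "subspace (ge_part n)"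
  by (simp add: ge_part_def)

lemma A_subset_ge_part: "n \<le> i \<Longrightarrow> A i \<subseteq> ge_part n"
  unfolding ge_part_def using span_superset by fastforce

lemma ge_part_iff: "x \<in> ge_part n \<longleftrightarrow> (\<forall>m<n. hcomp m x = 0)"
proof
  assume "x \<in> ge_part n"
  then show "\<forall>m<n. hcomp m x = 0"
    unfolding ge_part_def by (auto intro: hcomp_span_eq_0 simp: hcomp_homogeneous)
next
  assume "\<forall>m<n. hcomp m x = 0"
  then have "hcomp i x \<in> ge_part n" if "hcomp i x \<noteq> 0" for i
    using that A_subset_ge_part[of n i] hcomp_mem[of i x] by (meson not_le subsetD)
  then have "(\<Sum>i\<in>{i. hcomp i x \<noteq> 0}. hcomp i x) \<in> ge_part n"
    by (intro subspace_sum[OF subspace_ge_part]) simp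
  then show "x \<in> ge_part n" using sum_hcomp[OF finite_hcomp order_refl] by simp
qed

lemma ge_part_0 [simp]: "ge_part 0 = UNIV"
  using ge_part_iff by auto

lemma ge_part_antimono: "m \<le> n \<Longrightarrow> ge_part n \<subseteq> ge_part m"
  using ge_part_iff by auto

lemma ge_part_Suc_Int_A: "x \<in> ge_part (Suc n) \<Longrightarrow> x \<in> A n \<Longrightarrow> x = 0"
  using ge_part_iff[of x "Suc n"] hcomp_homogeneous[of x n n] by simp

lemma diff_hcomp_mem_ge_part_Suc: "x \<in> ge_part n \<Longrightarrow> x - hcomp n x \<in> ge_part (Suc n)"
  using hcomp_homogeneous[OF hcomp_mem[of n x]]
  by (auto simp: ge_part_iff hcomp_diff less_Suc_eq)

lemma ge_part_mult: "x \<in> ge_part m \<Longrightarrow> y \<in> ge_part n \<Longrightarrow> x * y \<in> ge_part (m + n)"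
proof -
  assume "x \<in> ge_part m" "y \<in> ge_part n"
  then have "x * y \<in> span {a * b | a b. a \<in> (\<Union>i\<in>{m..}. A i) \<and> b \<in> (\<Union>i\<in>{n..}. A i)}"
    unfolding ge_part_def by (rule span_mult)
  also have "\<dots> \<subseteq> ge_part (m + n)"
  proof (rule span_minimal[OF _ subspace_ge_part])
    have "a * b \<in> ge_part (m + n)" if "a \<in> A i" "m \<le> i" "b \<in> A j" "n \<le> j" for a b i j
      using that mult_mem_A A_subset_ge_part[of "m + n" "i + j"] by auto
    then show "{a * b | a b. a \<in> (\<Union>i\<in>{m..}. A i) \<and> b \<in> (\<Union>i\<in>{n..}. A i)} \<subseteq> ge_part (m + n)"
      by fastforce
  qed
  finally show ?thesis .
qed

lemma span_components: "span (\<Union>i. A i) = UNIV"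
  using ge_part_0 unfolding ge_part_def by simp

lemma quot_dim_eq_ge_part_Suc:
  assumes "fin_dim sc (A n)"
  shows "quot_dim_eq sc (ge_part n) (ge_part (Suc n)) (dim (A n))"
  unfolding quot_dim_eq_def
proof (intro conjI exI[of _ "A n"])
  show "ge_part (Suc n) \<subseteq> ge_part n" by (rule ge_part_antimono) simp
  show "A n \<subseteq> ge_part n" by (rule A_subset_ge_part) simp
  have "x \<in> {u + w | u w. u \<in> ge_part (Suc n) \<and> w \<in> A n}" if "x \<in> ge_part n" for x
  proof -
    have "x = (x - hcomp n x) + hcomp n x" by simp
    then show ?thesis using diff_hcomp_mem_ge_part_Suc[OF that] hcomp_mem[of n x] by blast
  qed
  moreover have "u + w \<in> ge_part n" if "u \<in> ge_part (Suc n)" "w \<in> A n" for u w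
    using that \<open>ge_part (Suc n) \<subseteq> ge_part n\<close> \<open>A n \<subseteq> ge_part n\<close>
      subspace_add[OF subspace_ge_part] by blast
  ultimately show "{u + w | u w. u \<in> ge_part (Suc n) \<and> w \<in> A n} = ge_part n" by blast
  show "ge_part (Suc n) \<inter> A n = {0}"
    using ge_part_Suc_Int_A subspace_0[OF subspace_ge_part] by auto
qed (simp_all add: assms subspace_A)

end

definition products :: "nat \<Rightarrow> 'a::monoid_mult set \<Rightarrow> 'a set" where
  "products n X = {prod_list xs | xs. set xs \<subseteq> X \<and> length xs = n}"

locale standard_graded_algebra = graded_algebra +
  assumes connected: "connected_graded sc A" and generated: "generated_in_degree_1 sc A"
begin

lemma A0_eq_span_one: "A 0 = span {1}"
  using connected by (simp add: connected_graded_def span_singleton)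

lemma one_mem_A0: "1 \<in> A 0"
  by (simp add: A0_eq_span_one span_base)

lemma one_neq_zero: "(1::'a) \<noteq> 0"
proof
  assume "(1::'a) = 0"
  then have "sc 1 1 = sc 0 1" by simp
  then show False using connected injD by (fastforce simp: connected_graded_def)
qed

lemma dim_A0: "dim (A 0) = 1"
  using dim_unique[of "{1}" "A 0" 1] A0_eq_span_one one_neq_zero span_superset by auto

lemma prod_list_mem_A: "set xs \<subseteq> A 1 \<Longrightarrow> prod_list xs \<in> A (length xs)"
  by (induction xs) (use one_mem_A0 mult_mem_A[of _ 1] in auto)

lemma A_subset_span_products: "A i \<subseteq> span (products i (A 1))"
proof
  fix x assume "x \<in> A i"
  have "y \<in> span (\<Union>k. products k (A 1)) \<Longrightarrow> hcomp i y \<in> span (products i (A 1))" for y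
  proof (induction y rule: span_induct_alt)
    case (step c p y)
    then obtain k where k: "p \<in> products k (A 1)" by blast
    then have "p \<in> A k" using prod_list_mem_A by (auto simp: products_def)
    then have "hcomp i p \<in> span (products i (A 1))"
      using k by (auto simp: hcomp_homogeneous span_base span_zero)
    then show ?case using step by (simp add: hcomp_add hcomp_scale span_add span_scale)
  qed (simp add: span_zero)
  moreover have "(\<Union>k. products k (A 1)) = {prod_list xs | xs. set xs \<subseteq> A 1}"
    by (auto simp: products_def)
  ultimately have "hcomp i x \<in> span (products i (A 1))"
    using generated by (simp add: generated_in_degree_1_def)
  then show "x \<in> span (products i (A 1))" using hcomp_homogeneous[OF \<open>x \<in> A i\<close>] by simp
qed

lemma prod_list_mem_ge_part: "set xs \<subseteq> ge_part 1 \<Longrightarrow> prod_list xs \<in> ge_part (length xs)"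
  by (induction xs) (use ge_part_mult[of _ 1] in auto)

text \<open>Grouping the first \<open>i - n + 1\<close> factors of a product of \<open>i\<close> elements of \<open>A\<^sub>1\<close> into one.\<close>

lemma products_subset_products_ge_part:
  assumes "1 \<le> n" "n \<le> i"
  shows "products i (A 1) \<subseteq> products n (ge_part 1)"
proof
  fix p assume "p \<in> products i (A 1)"
  then obtain xs where xs: "set xs \<subseteq> A 1" "length xs = i" "p = prod_list xs"
    by (auto simp: products_def)
  define k where "k = i - n + 1"
  define ys where "ys = prod_list (take k xs) # drop k xs"
  have "prod_list ys = p"
    using xs(3) prod_list.append[of "take k xs" "drop k xs"] by (simp add: ys_def)
  moreover have "length ys = n" using xs assms by (simp add: ys_def k_def)
  moreover have "prod_list (take k xs) \<in> A k"
    using prod_list_mem_A[of "take k xs"] xs assms set_take_subset[of k xs] by (simp add: k_def)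
  then have "set ys \<subseteq> ge_part 1"
    using A_subset_ge_part[of 1 k] A_subset_ge_part[of 1 1] set_drop_subset[of k xs] xs(1)
    by (auto simp: ys_def k_def)
  ultimately show "p \<in> products n (ge_part 1)" unfolding products_def by blast
qed

lemma ge_part_eq_span_products: "1 \<le> n \<Longrightarrow> ge_part n = span (products n (ge_part 1))"
proof
  assume n: "1 \<le> n"
  have "A i \<subseteq> span (products n (ge_part 1))" if "n \<le> i" for i
    using A_subset_span_products[of i] span_mono[OF products_subset_products_ge_part[OF n that]]
    by blast
  then show "ge_part n \<subseteq> span (products n (ge_part 1))"
    unfolding ge_part_def by (intro span_minimal) auto
  show "span (products n (ge_part 1)) \<subseteq> ge_part n"
    using prod_list_mem_ge_part by (intro span_minimal[OF _ subspace_ge_part]) (auto simp: products_def)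
qed

lemma aug_ideal_eq_ge_part: "aug_ideal sc A = ge_part 1"
  by (simp add: aug_ideal_def ge_part_def)

lemma two_sided_ideal_ge_part: "two_sided_ideal sc (ge_part 1)"
  unfolding two_sided_ideal_def
  using subspace_ge_part ge_part_mult[of _ 0 _ 1] ge_part_mult[of _ 1 _ 0] by simp

lemma ideal_square_ge_part: "ideal_square sc (ge_part 1) = ge_part 2"
proof
  have "x * y \<in> ge_part 2" if "x \<in> ge_part 1" "y \<in> ge_part 1" for x y
    using ge_part_mult[OF that] by (simp only: one_add_one)
  then show "ideal_square sc (ge_part 1) \<subseteq> ge_part 2"
    unfolding ideal_square_def by (intro span_minimal[OF _ subspace_ge_part]) blast
  have "products 2 (ge_part 1) \<subseteq> {x * y | x y. x \<in> ge_part 1 \<and> y \<in> ge_part 1}"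
  proof
    fix p assume "p \<in> products 2 (ge_part 1)"
    then obtain xs where xs: "set xs \<subseteq> ge_part 1" "length xs = 2" "p = prod_list xs"
      by (auto simp: products_def)
    then obtain a b where "xs = [a, b]" by (auto simp: numeral_2_eq_2 length_Suc_conv)
    then show "p \<in> {x * y | x y. x \<in> ge_part 1 \<and> y \<in> ge_part 1}" using xs by auto
  qed
  then show "ge_part 2 \<subseteq> ideal_square sc (ge_part 1)"
    using ge_part_eq_span_products[of 2] span_mono unfolding ideal_square_def by auto
qed

lemma quot_dim_eq_UNIV_ge_part: "quot_dim_eq sc UNIV (ge_part 1) 1"
proof -
  have "fin_dim sc (A 0)" unfolding fin_dim_def using A0_eq_span_one by blast
  then show ?thesis using quot_dim_eq_ge_part_Suc[of 0] by (simp add: dim_A0)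
qed

lemma codim1_ideal_tangent_dim_ge_part:
  assumes "fin_dim sc (A 1)"
  shows "codim1_ideal_tangent_dim sc (ge_part 1) (dim (A 1))"
  using quot_dim_eq_ge_part_Suc[OF assms] two_sided_ideal_ge_part quot_dim_eq_UNIV_ge_part
  unfolding codim1_ideal_tangent_dim_def ideal_square_ge_part by (simp add: numeral_2_eq_2)

lemma codim1_ideal_complement_le_dim_A1:
  assumes "fin_dim sc (A 1)" and "two_sided_ideal sc I" "quot_dim_eq sc UNIV I 1"
    and "subspace W" "W \<subseteq> I" "ideal_square sc I \<inter> W \<subseteq> {0}"
  shows "fin_dim sc W \<and> dim W \<le> dim (A 1)"
proof -
  obtain T where T: "T \<subseteq> A 1" "independent T" "A 1 \<subseteq> span T" "card T = dim (A 1)"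
    by (rule basis_exists)
  obtain S where "finite S" "span S = A 1" using assms(1) unfolding fin_dim_def by blast
  then have "finite T" using independent_span_bound[of S T] T by blast
  then show ?thesis
    using codim1_ideal_complement_bound[OF assms(2,3) _ _ T(3) assms(4-6)] generated T(4)
    by (simp add: generated_in_degree_1_def)
qed

end

locale algebra_isomorphism =
  fixes s1 :: "'k::field \<Rightarrow> 'a::ring_1 \<Rightarrow> 'a" and s2 :: "'k \<Rightarrow> 'b::ring_1 \<Rightarrow> 'b"
    and f :: "'a \<Rightarrow> 'b"
  assumes vs1: "vector_space s1" and vs2: "vector_space s2" and iso: "algebra_iso s1 s2 f"
begin

lemma bij: "bij f"
  and add: "f (x + y) = f x + f y"
  and scale: "f (s1 c x) = s2 c (f x)"
  and mult: "f (x * y) = f x * f y"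
  and one: "f 1 = 1"
  using iso unfolding algebra_iso_def by auto

sublocale module_hom s1 s2 f
  using vs1 vs2 add scale unfolding module_hom_iff by (simp add: module_iff_vector_space)

interpretation v1: vector_space s1 by (rule vs1)
interpretation v2: vector_space s2 by (rule vs2)

lemma inj: "inj f" and surj: "surj f"
  using bij bij_is_inj bij_is_surj by auto

lemma inv_f_f [simp]: "inv f (f x) = x" and f_inv_f [simp]: "f (inv f y) = y"
  using inj surj by (simp_all add: surj_f_inv_f)

lemma algebra_iso_inv: "algebra_iso s2 s1 (inv f)"
  unfolding algebra_iso_def
  using bij_imp_bij_inv[OF bij] by (metis add scale mult one inv_f_f f_inv_f)

lemma two_sided_ideal_image: "two_sided_ideal s1 I \<Longrightarrow> two_sided_ideal s2 (f ` I)"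
  unfolding two_sided_ideal_def
proof (intro conjI allI impI)
  assume I: "m1.subspace I \<and> (\<forall>r x. x \<in> I \<longrightarrow> r * x \<in> I \<and> x * r \<in> I)"
  then show "m2.subspace (f ` I)" using subspace_image by blast
  fix r x assume "x \<in> f ` I"
  then obtain x' where "x' \<in> I" "x = f x'" by blast
  moreover have "r * f x' = f (inv f r * x')" "f x' * r = f (x' * inv f r)" by (simp_all add: mult)
  ultimately show "r * x \<in> f ` I" "x * r \<in> f ` I" using I by auto
qed

lemma ideal_square_image: "ideal_square s2 (f ` I) = f ` ideal_square s1 I"
proof -
  have "f ` {x * y | x y. x \<in> I \<and> y \<in> I} = {x * y | x y. x \<in> f ` I \<and> y \<in> f ` I}"
  proof (intro equalityI subsetI)
    fix z assume "z \<in> {x * y | x y. x \<in> f ` I \<and> y \<in> f ` I}"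
    then obtain a b where "a \<in> I" "b \<in> I" "z = f a * f b" by blast
    then show "z \<in> f ` {x * y | x y. x \<in> I \<and> y \<in> I}"
      by (intro image_eqI[of _ _ "a * b"]) (auto simp: mult)
  qed (auto simp: mult, blast)
  then show ?thesis unfolding ideal_square_def by (simp add: span_image[symmetric])
qed

lemma dim_image: "v2.dim (f ` W) = v1.dim W"
proof -
  obtain B where B: "B \<subseteq> W" "m1.independent B" "W \<subseteq> m1.span B" "card B = v1.dim W"
    by (rule v1.basis_exists)
  have "m2.independent (f ` B)"
    using B(2) independent_injective_image inj inj_on_subset by blast
  moreover have "f ` W \<subseteq> m2.span (f ` B)" using B(3) by (auto simp: span_image)
  ultimately have "v2.dim (f ` W) = card (f ` B)"
    using v2.dim_unique[OF image_mono[OF B(1)]] by blast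
  also have "card (f ` B) = card B" using inj card_image inj_on_subset by blast
  finally show ?thesis using B(4) by simp
qed

lemma fin_dim_image: "fin_dim s1 W \<Longrightarrow> fin_dim s2 (f ` W)"
  unfolding fin_dim_def by (metis span_image finite_imageI)

lemma quot_dim_eq_image: "quot_dim_eq s1 V U n \<Longrightarrow> quot_dim_eq s2 (f ` V) (f ` U) n"
  unfolding quot_dim_eq_def
proof (elim conjE exE, intro conjI exI)
  fix W assume W: "U \<subseteq> V" "m1.subspace W" "W \<subseteq> V" "U \<inter> W = {0}"
    "{u + w | u w. u \<in> U \<and> w \<in> W} = V" "fin_dim s1 W" "v1.dim W = n"
  have "f ` {u + w | u w. u \<in> U \<and> w \<in> W} = {u + w | u w. u \<in> f ` U \<and> w \<in> f ` W}"
  proof (intro equalityI subsetI)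
    fix z assume "z \<in> {u + w | u w. u \<in> f ` U \<and> w \<in> f ` W}"
    then obtain a b where "a \<in> U" "b \<in> W" "z = f a + f b" by blast
    then show "z \<in> f ` {u + w | u w. u \<in> U \<and> w \<in> W}"
      by (intro image_eqI[of _ _ "a + b"]) (auto simp: add)
  qed (auto simp: add, blast)
  then show "{u + w | u w. u \<in> f ` U \<and> w \<in> f ` W} = f ` V" using W(5) by simp
  show "f ` U \<inter> f ` W = {0}" using W(4) image_Int[OF inj, of U W] by simp
qed (use subspace_image fin_dim_image dim_image in auto)

lemma codim1_ideal_tangent_dim_image:
  "codim1_ideal_tangent_dim s1 I n \<Longrightarrow> codim1_ideal_tangent_dim s2 (f ` I) n"
  unfolding codim1_ideal_tangent_dim_def
  using two_sided_ideal_image quot_dim_eq_image[of UNIV I 1]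
    quot_dim_eq_image[of I "ideal_square s1 I" n] ideal_square_image surj
  by auto

lemma products_image: "f ` products n X = products n (f ` X)"
proof (intro equalityI subsetI)
  have prod: "f (prod_list xs) = prod_list (map f xs)" for xs
    by (induction xs) (auto simp: mult one)
  fix p
  show "p \<in> f ` products n X \<Longrightarrow> p \<in> products n (f ` X)"
  proof -
    assume "p \<in> f ` products n X"
    then obtain xs where "set xs \<subseteq> X" "length xs = n" "p = prod_list (map f xs)"
      by (auto simp: products_def prod)
    then show ?thesis unfolding products_def by (intro CollectI exI[of _ "map f xs"]) auto
  qed
  assume "p \<in> products n (f ` X)"
  then obtain ys where ys: "set ys \<subseteq> f ` X" "length ys = n" "p = prod_list ys"
    by (auto simp: products_def)
  let ?xs = "map (inv f) ys"
  have "p = f (prod_list ?xs)" using ys(3) by (simp add: prod comp_def)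
  moreover have "set ?xs \<subseteq> X" "length ?xs = n" using ys(1,2) by auto
  ultimately show "p \<in> f ` products n X" unfolding products_def by blast
qed

end

locale aug_preserving_iso =
  GA: standard_graded_algebra scA A + GB: standard_graded_algebra scB B +
  F: algebra_isomorphism scA scB f
  for scA :: "'k::field \<Rightarrow> 'a::ring_1 \<Rightarrow> 'a" and A
    and scB :: "'k \<Rightarrow> 'b::ring_1 \<Rightarrow> 'b" and B and f +
  assumes image_aug: "f ` GA.ge_part 1 = GB.ge_part 1"
begin

lemma image_ge_part: "f ` GA.ge_part n = GB.ge_part n"
proof (cases "n = 0")
  case True then show ?thesis using F.surj by simp
next
  case False
  then have n: "1 \<le> n" by simp
  have "f ` GA.ge_part n = f ` GA.span (products n (GA.ge_part 1))"
    using GA.ge_part_eq_span_products[OF n] by simp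
  also have "\<dots> = GB.span (f ` products n (GA.ge_part 1))" by (simp add: F.span_image)
  also have "\<dots> = GB.span (products n (GB.ge_part 1))" by (simp only: F.products_image image_aug)
  also have "\<dots> = GB.ge_part n" using GB.ge_part_eq_span_products[OF n] by simp
  finally show ?thesis .
qed

lemma mem_ge_part_iff: "f x \<in> GB.ge_part n \<longleftrightarrow> x \<in> GA.ge_part n"
  using image_ge_part[of n] F.inj by (metis image_eqI inj_image_mem_iff)

text \<open>The associated graded map of \<open>f\<close>: on \<open>A\<^sub>n\<close> it is \<open>f\<close> followed by the projection
  onto \<open>B\<^sub>n\<close>.\<close>

definition gr_map :: "'a \<Rightarrow> 'b" where
  "gr_map x = (\<Sum>i\<in>{i. GA.hcomp i x \<noteq> 0}. GB.hcomp i (f (GA.hcomp i x)))"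

lemma gr_map_eq_sum:
  assumes "finite F" "{i. GA.hcomp i x \<noteq> 0} \<subseteq> F"
  shows "gr_map x = (\<Sum>i\<in>F. GB.hcomp i (f (GA.hcomp i x)))"
  unfolding gr_map_def by (rule sum.mono_neutral_left) (use assms in auto)

lemma gr_map_add: "gr_map (x + y) = gr_map x + gr_map y"
proof -
  let ?F = "{i. GA.hcomp i x \<noteq> 0} \<union> {i. GA.hcomp i y \<noteq> 0} \<union> {i. GA.hcomp i (x + y) \<noteq> 0}"
  have F: "finite ?F" using GA.finite_hcomp by simp
  have "gr_map (x + y) = (\<Sum>i\<in>?F. GB.hcomp i (f (GA.hcomp i (x + y))))"
    by (rule gr_map_eq_sum[OF F]) auto
  also have "\<dots> = (\<Sum>i\<in>?F. GB.hcomp i (f (GA.hcomp i x))) + (\<Sum>i\<in>?F. GB.hcomp i (f (GA.hcomp i y)))"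
    by (simp add: GA.hcomp_add F.add GB.hcomp_add sum.distrib)
  also have "\<dots> = gr_map x + gr_map y"
  proof -
    have "gr_map x = (\<Sum>i\<in>?F. GB.hcomp i (f (GA.hcomp i x)))" by (rule gr_map_eq_sum[OF F]) auto
    moreover have "gr_map y = (\<Sum>i\<in>?F. GB.hcomp i (f (GA.hcomp i y)))"
      by (rule gr_map_eq_sum[OF F]) auto
    ultimately show ?thesis by simp
  qed
  finally show ?thesis .
qed

lemma gr_map_scale: "gr_map (scA c x) = scB c (gr_map x)"
proof -
  let ?F = "{i. GA.hcomp i x \<noteq> 0} \<union> {i. GA.hcomp i (scA c x) \<noteq> 0}"
  have F: "finite ?F" using GA.finite_hcomp by simp
  have "gr_map (scA c x) = (\<Sum>i\<in>?F. GB.hcomp i (f (GA.hcomp i (scA c x))))"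
    by (rule gr_map_eq_sum[OF F]) auto
  also have "\<dots> = scB c (\<Sum>i\<in>?F. GB.hcomp i (f (GA.hcomp i x)))"
    by (simp add: GA.hcomp_scale F.scale GB.hcomp_scale GB.scale_sum_right)
  also have "\<dots> = scB c (gr_map x)"
  proof -
    have "gr_map x = (\<Sum>i\<in>?F. GB.hcomp i (f (GA.hcomp i x)))" by (rule gr_map_eq_sum[OF F]) auto
    then show ?thesis by simp
  qed
  finally show ?thesis .
qed

sublocale gr: module_hom scA scB gr_map
  using GA.vector_space_axioms GB.vector_space_axioms gr_map_add gr_map_scale
  by (simp add: module_hom_iff module_iff_vector_space)

lemma gr_map_homogeneous:
  assumes "x \<in> A n" shows "gr_map x = GB.hcomp n (f x)"
proof -
  have "gr_map x = (\<Sum>i\<in>{n}. GB.hcomp i (f (GA.hcomp i x)))"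
    by (rule gr_map_eq_sum) (auto simp: GA.hcomp_homogeneous[OF assms])
  then show ?thesis by (simp add: GA.hcomp_homogeneous[OF assms])
qed

lemma gr_map_mem_B: "x \<in> A n \<Longrightarrow> gr_map x \<in> B n"
  using gr_map_homogeneous GB.hcomp_mem by simp

lemma f_diff_gr_map_mem_ge_part: "x \<in> A n \<Longrightarrow> f x - gr_map x \<in> GB.ge_part (Suc n)"
  using GB.diff_hcomp_mem_ge_part_Suc[of "f x" n] GA.A_subset_ge_part[of n n]
  by (auto simp: gr_map_homogeneous mem_ge_part_iff)

text \<open>Writing \<open>f x = gr_map x + r\<close> and \<open>f y = gr_map y + s\<close> with \<open>r, s\<close> of higher degree,
  \<open>f (x * y) - gr_map x * gr_map y\<close> has degree above \<open>n + m\<close>.\<close>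

lemma gr_map_mult_homogeneous:
  assumes x: "x \<in> A n" and y: "y \<in> A m"
  shows "gr_map (x * y) = gr_map x * gr_map y"
proof -
  define r s where "r = f x - gr_map x" and "s = f y - gr_map y"
  have r: "r \<in> GB.ge_part (n + 1)" and s: "s \<in> GB.ge_part (m + 1)"
    using f_diff_gr_map_mem_ge_part x y by (simp_all add: r_def s_def)
  have gx: "gr_map x \<in> GB.ge_part n" and gy: "gr_map y \<in> GB.ge_part m"
    using gr_map_mem_B x y GB.A_subset_ge_part by blast+
  have "gr_map x * s \<in> GB.ge_part (n + m + 1)" "r * gr_map y \<in> GB.ge_part (n + m + 1)"
    "r * s \<in> GB.ge_part (n + m + 1)"
    using GB.ge_part_mult[OF gx s] GB.ge_part_mult[OF r gy] GB.ge_part_mult[OF r s]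
      GB.ge_part_antimono[of "n + m + 1" "n + 1 + (m + 1)"]
    by (auto simp: ac_simps)
  moreover have "f (x * y) - gr_map x * gr_map y = gr_map x * s + r * gr_map y + r * s"
    by (simp add: r_def s_def F.mult algebra_simps)
  ultimately have "f (x * y) - gr_map x * gr_map y \<in> GB.ge_part (Suc (n + m))"
    using GB.subspace_add[OF GB.subspace_ge_part] by simp
  moreover have "gr_map x * gr_map y \<in> B (n + m)"
    using GB.mult_mem_A[OF gr_map_mem_B[OF x] gr_map_mem_B[OF y]] .
  ultimately show ?thesis
    using gr_map_homogeneous[OF GA.mult_mem_A[OF x y]] GB.hcomp_homogeneous
      GB.ge_part_iff[of _ "Suc (n + m)"]
    by (metis GB.hcomp_diff diff_add_cancel lessI add_0)
qed

lemma gr_map_eq_sum_hcomp: "gr_map x = (\<Sum>i\<in>{i. GA.hcomp i x \<noteq> 0}. gr_map (GA.hcomp i x))"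
  by (simp only: gr_map_def[of x] gr_map_homogeneous[OF GA.hcomp_mem])

lemma gr_map_mult: "gr_map (x * y) = gr_map x * gr_map y"
proof -
  let ?I = "{i. GA.hcomp i x \<noteq> 0}" and ?J = "{j. GA.hcomp j y \<noteq> 0}"
  have "x * y = (\<Sum>i\<in>?I. GA.hcomp i x) * (\<Sum>j\<in>?J. GA.hcomp j y)"
    using GA.sum_hcomp[OF GA.finite_hcomp order_refl] by simp
  also have "\<dots> = (\<Sum>i\<in>?I. \<Sum>j\<in>?J. GA.hcomp i x * GA.hcomp j y)" by (rule sum_product)
  finally have "gr_map (x * y) = (\<Sum>i\<in>?I. \<Sum>j\<in>?J. gr_map (GA.hcomp i x) * gr_map (GA.hcomp j y))"
    by (simp add: gr.sum gr_map_mult_homogeneous[OF GA.hcomp_mem GA.hcomp_mem])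
  also have "\<dots> = (\<Sum>i\<in>?I. gr_map (GA.hcomp i x)) * (\<Sum>j\<in>?J. gr_map (GA.hcomp j y))"
    by (rule sum_product[symmetric])
  also have "\<dots> = gr_map x * gr_map y" by (simp only: gr_map_eq_sum_hcomp[symmetric])
  finally show ?thesis .
qed

lemma gr_map_one: "gr_map 1 = 1"
  using gr_map_homogeneous[OF GA.one_mem_A0] GB.hcomp_homogeneous[OF GB.one_mem_A0]
  by (simp add: F.one)

lemma hcomp_gr_map: "GB.hcomp n (gr_map x) = gr_map (GA.hcomp n x)"
  using GB.hcomp_eq[OF GA.finite_hcomp gr_map_mem_B[OF GA.hcomp_mem] gr_map_eq_sum_hcomp]
  by auto

lemma inj_gr_map: "inj gr_map"
  unfolding gr.inj_iff_eq_0
proof (intro allI impI)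
  fix x assume "gr_map x = 0"
  then have "gr_map (GA.hcomp n x) = 0" for n using hcomp_gr_map[of n x] by simp
  then have "f (GA.hcomp n x) \<in> GB.ge_part (Suc n)" for n
    using f_diff_gr_map_mem_ge_part[OF GA.hcomp_mem] by (metis diff_zero)
  then have "GA.hcomp n x = 0" for n
    using GA.ge_part_Suc_Int_A GA.hcomp_mem mem_ge_part_iff by blast
  then show "x = 0" by (rule GA.eq_0_if_hcomp_eq_0)
qed

lemma image_gr_map_A: "gr_map ` A n = B n"
proof
  show "gr_map ` A n \<subseteq> B n" using gr_map_mem_B by blast
  show "B n \<subseteq> gr_map ` A n"
  proof
    fix y assume y: "y \<in> B n"
    define x where "x = inv f y"
    have "f x \<in> GB.ge_part n" using y GB.A_subset_ge_part[of n n] by (auto simp: x_def)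
    then have "f (x - GA.hcomp n x) \<in> GB.ge_part (Suc n)"
      using GA.diff_hcomp_mem_ge_part_Suc mem_ge_part_iff by blast
    moreover have "f (GA.hcomp n x) = y - f (x - GA.hcomp n x)" by (simp add: F.diff x_def)
    ultimately have "GB.hcomp n (f (GA.hcomp n x)) = y"
      using GB.hcomp_homogeneous[OF y] GB.ge_part_iff[of _ "Suc n"] by (simp add: GB.hcomp_diff)
    then have "y = gr_map (GA.hcomp n x)" by (simp add: gr_map_homogeneous[OF GA.hcomp_mem])
    then show "y \<in> gr_map ` A n" using GA.hcomp_mem by blast
  qed
qed

lemma surj_gr_map: "surj gr_map"
proof -
  have "GB.subspace (range gr_map)" by (rule gr.subspace_image[OF GA.subspace_UNIV])
  moreover have "(\<Union>n. B n) \<subseteq> range gr_map" using image_gr_map_A by blast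
  ultimately have "GB.span (\<Union>n. B n) \<subseteq> range gr_map" by (intro GB.span_minimal)
  then show ?thesis using GB.span_components by auto
qed

lemma graded_algebra_iso_gr_map: "graded_algebra_iso scA A scB B gr_map"
  unfolding graded_algebra_iso_def algebra_iso_def bij_def
  by (simp add: inj_gr_map surj_gr_map gr_map_add gr_map_scale gr_map_mult gr_map_one
      image_gr_map_A)

end

lemma standard_graded_algebraI:
  "connected_graded sc A \<Longrightarrow> generated_in_degree_1 sc A \<Longrightarrow> standard_graded_algebra sc A"
  by (simp add: standard_graded_algebra_def standard_graded_algebra_axioms_def graded_algebra_def
      connected_graded_def)

text \<open>Pulled back to \<open>A\<close>, the augmentation ideal of \<open>B\<close> is a codimension 1 ideal \<open>I\<close>
  and \<open>B\<^sub>1\<close> becomes a complement of \<open>I\<^sup>2\<close> in \<open>I\<close>; its dimension is bounded by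
  \<open>dim A\<^sub>1\<close> because \<open>A\<^sub>1\<close> generates \<open>A\<close>.\<close>

lemma dim_degree_one_le:
  assumes A: "standard_graded_algebra scA A" and B: "standard_graded_algebra scB B"
    and f: "algebra_iso scB scA f" and fin: "fin_dim scA (A 1)"
  shows "fin_dim scB (B 1) \<and>
    Vector_Spaces.vector_space.dim scB (B 1) \<le> Vector_Spaces.vector_space.dim scA (A 1)"
proof -
  interpret GA: standard_graded_algebra scA A by (rule A)
  interpret GB: standard_graded_algebra scB B by (rule B)
  interpret F: algebra_isomorphism scB scA f
    using GA.vector_space_axioms GB.vector_space_axioms f by unfold_locales
  interpret F': algebra_isomorphism scA scB "inv f"
    using GA.vector_space_axioms GB.vector_space_axioms F.algebra_iso_inv by unfold_locales
  let ?I = "f ` GB.ge_part 1"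
  have I: "two_sided_ideal scA ?I" by (rule F.two_sided_ideal_image[OF GB.two_sided_ideal_ge_part])
  have codim: "quot_dim_eq scA UNIV ?I 1"
    using F.quot_dim_eq_image[OF GB.quot_dim_eq_UNIV_ge_part] F.surj by simp
  have "GB.ge_part 2 \<inter> B 1 \<subseteq> {0}"
    using GB.ge_part_Suc_Int_A[of _ 1] by (auto simp: numeral_2_eq_2)
  then have "f ` GB.ge_part 2 \<inter> f ` B 1 \<subseteq> {0}"
    by (auto simp: image_Int[OF F.inj, symmetric])
  then have "ideal_square scA ?I \<inter> f ` B 1 \<subseteq> {0}"
    by (simp only: F.ideal_square_image GB.ideal_square_ge_part)
  moreover have "f ` B 1 \<subseteq> ?I" using GB.A_subset_ge_part[of 1 1] by blast
  ultimately have "fin_dim scA (f ` B 1) \<and> GA.dim (f ` B 1) \<le> GA.dim (A 1)"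
    using GA.codim1_ideal_complement_le_dim_A1[OF fin I codim F.subspace_image[OF GB.subspace_A]]
    by blast
  moreover have "inv f ` f ` B 1 = B 1" by (simp add: image_image)
  ultimately show ?thesis using F'.fin_dim_image[of "f ` B 1"] F.dim_image[of "B 1"] by simp
qed

theorem lemma1p2:
  fixes scA :: "'k::field \<Rightarrow> 'a::ring_1 \<Rightarrow> 'a" and A :: "nat \<Rightarrow> 'a set"
    and scB :: "'k \<Rightarrow> 'b::ring_1 \<Rightarrow> 'b" and B :: "nat \<Rightarrow> 'b set"
    and d :: nat
  assumes "connected_graded scA A" and "generated_in_degree_1 scA A"
    and "connected_graded scB B" and "generated_in_degree_1 scB B"
    and "fin_dim scA (A 1)" and "d = Vector_Spaces.vector_space.dim scA (A 1)"
    and "codim1_ideal_tangent_dim scA (aug_ideal scA A) d"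
    and "\<forall>I. codim1_ideal_tangent_dim scA I d \<longrightarrow> I = aug_ideal scA A"
    and "\<exists>f. algebra_iso scA scB f"
  shows "\<exists>g. graded_algebra_iso scA A scB B g"
proof -
  have A: "standard_graded_algebra scA A" and B: "standard_graded_algebra scB B"
    using assms(1-4) by (simp_all add: standard_graded_algebraI)
  interpret GA: standard_graded_algebra scA A by (rule A)
  interpret GB: standard_graded_algebra scB B by (rule B)
  obtain f where f: "algebra_iso scA scB f" using assms(9) by blast
  interpret F: algebra_isomorphism scA scB f
    using GA.vector_space_axioms GB.vector_space_axioms f by unfold_locales
  interpret F': algebra_isomorphism scB scA "inv f"
    using GA.vector_space_axioms GB.vector_space_axioms F.algebra_iso_inv by unfold_locales
  have fin: "fin_dim scB (B 1)" and "GB.dim (B 1) \<le> d"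
    using dim_degree_one_le[OF A B F.algebra_iso_inv assms(5)] assms(6) by auto
  moreover have "d \<le> GB.dim (B 1)"
    using dim_degree_one_le[OF B A f fin] assms(6) by simp
  ultimately have "codim1_ideal_tangent_dim scB (GB.ge_part 1) d"
    using GB.codim1_ideal_tangent_dim_ge_part[OF fin] by simp
  then have "inv f ` GB.ge_part 1 = GA.ge_part 1"
    using F'.codim1_ideal_tangent_dim_image assms(8) GA.aug_ideal_eq_ge_part by simp
  then have "f ` GA.ge_part 1 = f ` inv f ` GB.ge_part 1" by simp
  also have "\<dots> = GB.ge_part 1" by (simp add: image_image)
  finally interpret aug_preserving_iso scA A scB B f by unfold_locales
  show ?thesis using graded_algebra_iso_gr_map by blast
qed

end
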